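(* The $t$-harmonic product $\star_t$ makes $\mathfrak{h}^1[t]$ a commutative (associative, unital) $\mathfrak{A}[t]$-algebra, and $S^t$ is an algebra isomorphism from $(\mathfrak{h}^1[t],\star_t)$ onto $(\mathfrak{h}^1[t],* )$; that is, $S^t$ is bijective and $S^t(w_1\star_t w_2)=S^t(w_1)*S^t(w_2)$ for all $w_1,w_2\in\mathfrak{h}^1[t]$.
   Context: Let $\mathfrak{A}$ be a commutative $\mathbb{Q}$-algebra, $A$ a set of letters, and $\mathfrak{h}^1$ the non-commutative polynomial algebra over $\mathfrak{A}$ in the letters of $A$ (the free $\mathfrak{A}$-module on words, i.e. finite sequences of letters including the empty word $1$, with concatenation product). Let $\mathfrak{z}\subset\mathfrak{h}^1$ be the $\mathfrak{A}$-submodule spanned by $A$, and assume $\mathfrak{z}$ carries a commutative associative (not necessarily unital) $\mathfrak{A}$-bilinear product $\circ\colon\mathfrak{z}\times\mathfrak{z}\to\mathfrak{z}$. This is extended to an action of $\mathfrak{z}$ on $\mathfrak{h}^1$ by $a\circ 1=0$ and $a\circ(bw)=(a\circ b)w$ for $a,b\in A$ and words $w$, extended $\mathfrak{A}$-bilinearly. Let $t$ be an indeterminate, $\mathfrak{h}^1[t]=\mathfrak{h}^1\otimes_{\mathbb{Q}}\mathbb{Q}[t]$, with all structures extended $\mathfrak{A}[t]$-linearly. Define the $\mathfrak{A}[t]$-linear operator $S^t$ on $\mathfrak{h}^1[t]$ by $S^t(1)=1$ and $S^t(aw)=aS^t(w)+t\,a\circ S^t(w)$ for $a\in A$ and words $w$.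 The harmonic product $*$ is the $\mathfrak{A}[t]$-bilinear product on $\mathfrak{h}^1[t]$ given by $1*w=w*1=w$ and $(aw)*(bw')=a(w*bw')+b(aw*w')+(a\circ b)(w*w')$ for $a,b\in A$ and words $w,w'$. The $t$-harmonic product $\star_t$ is the $\mathfrak{A}[t]$-bilinear product on $\mathfrak{h}^1[t]$ given by $1\star_t w=w\star_t 1=w$ and $(aw)\star_t(bw')=a(w\star_t bw')+b(aw\star_t w')+(1-2t)(a\circ b)(w\star_t w')+(t^2-t)\,(a\circ b)\circ(w\star_t w')$ for $a,b\in A$ and words $w,w'$ (here $(a\circ b)\circ(\cdot)$ is the action of $\mathfrak{z}$ on $\mathfrak{h}^1$). *)

theory Defs
  imports "HOL-Library.Poly_Mapping" "HOL-Computational_Algebra.Polynomial"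
begin

text \<open>Elements of h^1 (over a coefficient ring 'r) are finitely supported
  functions from words ('a list) to 'r; elements of z are finitely supported
  functions from letters 'a to 'r.  A product on z is given on letters by
  circ a b (an element of z) and extended bilinearly.\<close>

definition smul :: "'r::comm_semiring_1 \<Rightarrow> ('b \<Rightarrow>\<^sub>0 'r) \<Rightarrow> ('b \<Rightarrow>\<^sub>0 'r)" where
  "smul r p = Poly_Mapping.map (\<lambda>c. r * c) p"

definition linext :: "('b \<Rightarrow> ('c \<Rightarrow>\<^sub>0 'r)) \<Rightarrow> ('b \<Rightarrow>\<^sub>0 'r) \<Rightarrow> ('c \<Rightarrow>\<^sub>0 'r::comm_semiring_1)" where
  "linext f x = (\<Sum>v\<in>Poly_Mapping.keys x. smul (Poly_Mapping.lookup x v) (f v))"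

definition bilinext :: "('b \<Rightarrow> 'c \<Rightarrow> ('d \<Rightarrow>\<^sub>0 'r)) \<Rightarrow> ('b \<Rightarrow>\<^sub>0 'r) \<Rightarrow> ('c \<Rightarrow>\<^sub>0 'r)
    \<Rightarrow> ('d \<Rightarrow>\<^sub>0 'r::comm_semiring_1)" where
  "bilinext f x y = (\<Sum>v\<in>Poly_Mapping.keys x. \<Sum>w\<in>Poly_Mapping.keys y. smul (Poly_Mapping.lookup x v * Poly_Mapping.lookup y w) (f v w))"

definition zcat :: "('a \<Rightarrow>\<^sub>0 'r) \<Rightarrow> ('a list \<Rightarrow>\<^sub>0 'r) \<Rightarrow> ('a list \<Rightarrow>\<^sub>0 'r::comm_semiring_1)" where
  "zcat u x = bilinext (\<lambda>a w. Poly_Mapping.single (a # w) 1) u x"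

definition lcons :: "'a \<Rightarrow> ('a list \<Rightarrow>\<^sub>0 'r) \<Rightarrow> ('a list \<Rightarrow>\<^sub>0 'r::comm_semiring_1)" where
  "lcons a x = zcat (Poly_Mapping.single a 1) x"

definition circz :: "('a \<Rightarrow> 'a \<Rightarrow> ('a \<Rightarrow>\<^sub>0 'r)) \<Rightarrow> ('a \<Rightarrow>\<^sub>0 'r) \<Rightarrow> ('a \<Rightarrow>\<^sub>0 'r)
    \<Rightarrow> ('a \<Rightarrow>\<^sub>0 'r::comm_semiring_1)" where
  "circz circ u v = bilinext circ u v"

definition zact :: "('a \<Rightarrow> 'a \<Rightarrow> ('a \<Rightarrow>\<^sub>0 'r)) \<Rightarrow> ('a \<Rightarrow>\<^sub>0 'r) \<Rightarrow> ('a list \<Rightarrow>\<^sub>0 'r)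
    \<Rightarrow> ('a list \<Rightarrow>\<^sub>0 'r::comm_semiring_1)" where
  "zact circ u x = linext (\<lambda>w. case w of [] \<Rightarrow> 0
     | b # w' \<Rightarrow> zcat (circz circ u (Poly_Mapping.single b 1)) (Poly_Mapping.single w' 1)) x"

function hprod_w :: "('a \<Rightarrow> 'a \<Rightarrow> ('a \<Rightarrow>\<^sub>0 'r)) \<Rightarrow> 'a list \<Rightarrow> 'a list
    \<Rightarrow> ('a list \<Rightarrow>\<^sub>0 'r::comm_semiring_1)" where
  "hprod_w circ [] v = Poly_Mapping.single v 1"
| "hprod_w circ (a # u) [] = Poly_Mapping.single (a # u) 1"
| "hprod_w circ (a # u) (b # v) =
     lcons a (hprod_w circ u (b # v)) + lcons b (hprod_w circ (a # u) v)
     + zcat (circ a b) (hprod_w circ u v)"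
  by pat_completeness auto
termination by (relation "measure (\<lambda>(c, u, v). length u + length v)") auto

definition harm :: "('a \<Rightarrow> 'a \<Rightarrow> ('a \<Rightarrow>\<^sub>0 'r)) \<Rightarrow> ('a list \<Rightarrow>\<^sub>0 'r) \<Rightarrow> ('a list \<Rightarrow>\<^sub>0 'r)
    \<Rightarrow> ('a list \<Rightarrow>\<^sub>0 'r::comm_semiring_1)" where
  "harm circ x y = bilinext (hprod_w circ) x y"

function tprod_w :: "('a \<Rightarrow> 'a \<Rightarrow> ('a \<Rightarrow>\<^sub>0 'r)) \<Rightarrow> 'r \<Rightarrow> 'a list \<Rightarrow> 'a list
    \<Rightarrow> ('a list \<Rightarrow>\<^sub>0 'r::comm_ring_1)" where
  "tprod_w circ t [] v = Poly_Mapping.single v 1"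
| "tprod_w circ t (a # u) [] = Poly_Mapping.single (a # u) 1"
| "tprod_w circ t (a # u) (b # v) =
     lcons a (tprod_w circ t u (b # v)) + lcons b (tprod_w circ t (a # u) v)
     + smul (1 - 2 * t) (zcat (circ a b) (tprod_w circ t u v))
     + smul (t ^ 2 - t) (zact circ (circ a b) (tprod_w circ t u v))"
  by pat_completeness auto
termination by (relation "measure (\<lambda>(c, t, u, v). length u + length v)") auto

definition tharm :: "('a \<Rightarrow> 'a \<Rightarrow> ('a \<Rightarrow>\<^sub>0 'r)) \<Rightarrow> 'r \<Rightarrow> ('a list \<Rightarrow>\<^sub>0 'r) \<Rightarrow> ('a list \<Rightarrow>\<^sub>0 'r)
    \<Rightarrow> ('a list \<Rightarrow>\<^sub>0 'r::comm_ring_1)" where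
  "tharm circ t x y = bilinext (tprod_w circ t) x y"

fun St_w :: "('a \<Rightarrow> 'a \<Rightarrow> ('a \<Rightarrow>\<^sub>0 'r)) \<Rightarrow> 'r \<Rightarrow> 'a list \<Rightarrow> ('a list \<Rightarrow>\<^sub>0 'r::comm_semiring_1)" where
  "St_w circ t [] = Poly_Mapping.single [] 1"
| "St_w circ t (a # w) =
     lcons a (St_w circ t w) + smul t (zact circ (Poly_Mapping.single a 1) (St_w circ t w))"

definition St :: "('a \<Rightarrow> 'a \<Rightarrow> ('a \<Rightarrow>\<^sub>0 'r)) \<Rightarrow> 'r \<Rightarrow> ('a list \<Rightarrow>\<^sub>0 'r) \<Rightarrow> ('a list \<Rightarrow>\<^sub>0 'r::comm_semiring_1)" where
  "St circ t x = linext (St_w circ t) x"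

definition liftc :: "('a \<Rightarrow> 'a \<Rightarrow> ('a \<Rightarrow>\<^sub>0 'k::comm_ring_1)) \<Rightarrow> 'a \<Rightarrow> 'a \<Rightarrow> ('a \<Rightarrow>\<^sub>0 'k poly)" where
  "liftc circ a b = Poly_Mapping.map (\<lambda>c. [:c:]) (circ a b)"

end

theory Submission
  imports Defs
begin

(* The proof has three parts.
   (1) Linear algebra of such extensions: linearity, and an induction principle reducing
       identities between (bi)linear maps to identities on basis words.
   (2) Assuming only that the letter product is commutative and associative, and working
       over an arbitrary commutative ring with an arbitrary parameter t:
       the harmonic product * is commutative and associative (induction on total length),
       S^t commutes with the action of z and S^(-t) inverts S^t, and the action of z
       satisfies two Leibniz-type rules with respect to *.  These rules show that
       S^t(x \<star>_t y) = S^t x * S^t y on words, by induction along the recursion of \<star>_t.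
       Commutativity and associativity of \<star>_t are then transported from * through the
       bijection S^t.
   (3) The product lifted to polynomial coefficients is again commutative and associative,
       so (2) applies with t the polynomial variable. *)

abbreviation pm_single where "pm_single \<equiv> Poly_Mapping.single"
abbreviation pm_lookup where "pm_lookup \<equiv> Poly_Mapping.lookup"
abbreviation pm_keys where "pm_keys \<equiv> Poly_Mapping.keys"

abbreviation E where "E w \<equiv> pm_single w 1"


lemma lookup_smul [simp]: "pm_lookup (smul r p) k = r * pm_lookup p k"
  by (simp add: smul_def Poly_Mapping.map.rep_eq when_def)

lemma smul_add_right [simp]: "smul r (p + q) = smul r p + smul r q"
  by (rule poly_mapping_eqI) (simp add: lookup_add algebra_simps)

lemma smul_add_left: "smul (r + s) p = smul r p + smul s p"
  by (rule poly_mapping_eqI) (simp add: lookup_add algebra_simps)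

lemma smul_smul [simp]: "smul r (smul s p) = smul (r * s) p"
  by (rule poly_mapping_eqI) (simp add: algebra_simps)

lemma smul_one [simp]: "smul 1 p = p"
  by (rule poly_mapping_eqI) simp

lemma smul_zero_left [simp]: "smul 0 p = 0"
  by (rule poly_mapping_eqI) simp

lemma smul_zero_right [simp]: "smul r 0 = 0"
  by (rule poly_mapping_eqI) simp

lemma smul_sum: "smul r (sum f S) = (\<Sum>x\<in>S. smul r (f x))"
  by (rule poly_mapping_eqI) (simp add: lookup_sum sum_distrib_left)

lemma smul_diff_right [simp]: "smul (r::'r::comm_ring_1) (p - q) = smul r p - smul r q"
  by (rule poly_mapping_eqI) (simp add: lookup_minus algebra_simps)

lemma smul_uminus_left: "smul (- r) p = - smul (r::'r::comm_ring_1) p"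
  by (rule poly_mapping_eqI) simp

lemma smul_single: "smul r (pm_single k c) = pm_single k (r * c)"
  by (rule poly_mapping_eqI) (simp add: lookup_single when_def)


section \<open>Linear and bilinear extensions\<close>

lemma linext_superset:
  assumes "finite S" "pm_keys x \<subseteq> S"
  shows "linext f x = (\<Sum>v\<in>S. smul (pm_lookup x v) (f v))"
  unfolding linext_def
  by (rule sum.mono_neutral_left) (auto simp: assms in_keys_iff)

lemma linext_zero [simp]: "linext f 0 = 0"
  by (simp add: linext_def)

lemma linext_add [simp]: "linext f (x + y) = linext f x + linext f y"
proof -
  let ?S = "pm_keys x \<union> pm_keys y"
  have "linext f (x + y) = (\<Sum>v\<in>?S. smul (pm_lookup (x + y) v) (f v))"
    by (rule linext_superset) (auto simp: keys_add[of x y])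
  also have "\<dots> = (\<Sum>v\<in>?S. smul (pm_lookup x v) (f v)) + (\<Sum>v\<in>?S. smul (pm_lookup y v) (f v))"
    by (simp add: lookup_add smul_add_left sum.distrib)
  also have "\<dots> = linext f x + linext f y"
    by (simp add: linext_superset[of ?S x] linext_superset[of ?S y])
  finally show ?thesis .
qed

lemma linext_smul [simp]: "linext f (smul r x) = smul r (linext f x)"
proof -
  have "linext f (smul r x) = (\<Sum>v\<in>pm_keys x. smul (pm_lookup (smul r x) v) (f v))"
    by (rule linext_superset) (auto simp: in_keys_iff)
  then show ?thesis by (simp add: linext_def smul_sum)
qed

lemma linext_single [simp]: "linext f (pm_single k c) = smul c (f k)"
proof -
  have "linext f (pm_single k c) = (\<Sum>v\<in>{k}. smul (pm_lookup (pm_single k c) v) (f v))"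
    by (rule linext_superset) auto
  then show ?thesis by simp
qed

lemma linext_fun_add: "linext (\<lambda>v. f v + g v) x = linext f x + linext g x"
  by (simp add: linext_def sum.distrib)

lemma linext_fun_smul: "linext (\<lambda>v. smul r (f v)) x = smul r (linext f x)"
  by (simp add: linext_def smul_sum mult.commute)

lemma linext_basis: "linext E x = x"
proof (rule poly_mapping_eqI)
  fix j
  have "pm_lookup (linext E x) j = (\<Sum>k\<in>pm_keys x. pm_lookup x k * (if k = j then 1 else 0))"
    by (simp add: linext_def lookup_sum lookup_single when_def)
  also have "\<dots> = pm_lookup x j"
    by (simp add: if_distrib sum.delta in_keys_iff cong: if_cong)
  finally show "pm_lookup (linext E x) j = pm_lookup x j" .
qed

lemma pm_induct [case_names zero add smul single]:
  assumes "P 0" and "\<And>p q. P p \<Longrightarrow> P q \<Longrightarrow> P (p + q)"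
    and "\<And>c p. P p \<Longrightarrow> P (smul c p)" and "\<And>k. P (E k)"
  shows "P x"
proof -
  have "P (\<Sum>k\<in>S. smul (pm_lookup x k) (E k))" if "finite S" for S
    using that by (induct rule: finite_induct) (auto intro: assms)
  then have "P (linext E x)" by (simp add: linext_def)
  then show ?thesis by (simp add: linext_basis)
qed

lemma bilinext_linext1: "bilinext f x y = linext (\<lambda>v. linext (f v) y) x"
  unfolding bilinext_def linext_def by (simp add: smul_sum)

lemma bilinext_linext2: "bilinext f x y = linext (\<lambda>w. linext (\<lambda>v. f v w) x) y"
  unfolding bilinext_def linext_def by (subst sum.swap) (simp add: smul_sum mult.commute)

lemma bilinext_add1 [simp]: "bilinext f (x + x') y = bilinext f x y + bilinext f x' y"
  and bilinext_smul1 [simp]: "bilinext f (smul r x) y = smul r (bilinext f x y)"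
  and bilinext_zero1 [simp]: "bilinext f 0 y = 0"
  by (simp_all add: bilinext_linext1)

lemma bilinext_add2 [simp]: "bilinext f x (y + y') = bilinext f x y + bilinext f x y'"
  and bilinext_smul2 [simp]: "bilinext f x (smul r y) = smul r (bilinext f x y)"
  and bilinext_zero2 [simp]: "bilinext f x 0 = 0"
  by (simp_all add: bilinext_linext2)

lemma bilinext_single [simp]: "bilinext f (pm_single a c) (pm_single b d) = smul (c * d) (f a b)"
  by (simp add: bilinext_linext1)

lemma additive_diff:
  fixes f :: "'b::ab_group_add \<Rightarrow> 'c::ab_group_add"
  assumes "\<And>x y. f (x + y) = f x + f y"
  shows "f (x - y) = f x - f y"
  using assms[of "x - y" y] by (simp add: algebra_simps)


lemma zcat_linear [simp]:
  "zcat (u + u') x = zcat u x + zcat u' x" "zcat u (x + x') = zcat u x + zcat u x'"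
  "zcat (smul r u) x = smul r (zcat u x)" "zcat u (smul r x) = smul r (zcat u x)"
  "zcat 0 x = 0" "zcat u 0 = 0"
  by (simp_all add: zcat_def)

lemma zcat_single: "zcat (pm_single a c) (pm_single w d) = pm_single (a # w) (c * d)"
  by (simp add: zcat_def smul_single)

lemma circz_linear [simp]:
  "circz circ (u + u') v = circz circ u v + circz circ u' v"
  "circz circ u (v + v') = circz circ u v + circz circ u v'"
  "circz circ (smul r u) v = smul r (circz circ u v)"
  "circz circ u (smul r v) = smul r (circz circ u v)"
  "circz circ 0 v = 0" "circz circ u 0 = 0"
  by (simp_all add: circz_def)

lemma circz_single [simp]: "circz circ (E a) (E b) = circ a b"
  by (simp add: circz_def)

lemma zact_linear [simp]:
  "zact circ u (x + x') = zact circ u x + zact circ u x'"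
  "zact circ u (smul r x) = smul r (zact circ u x)"
  "zact circ u 0 = 0"
  by (simp_all add: zact_def)

lemma zact_linear1 [simp]:
  "zact circ (u + u') x = zact circ u x + zact circ u' x"
  "zact circ (smul r u) x = smul r (zact circ u x)"
  "zact circ 0 x = 0"
proof -
  show add: "zact circ (u + u') x = zact circ u x + zact circ u' x"
    unfolding zact_def linext_fun_add[symmetric]
    by (intro arg_cong[where f="\<lambda>f. linext f x"] ext) (simp split: list.split)
  show smul: "zact circ (smul r u) x = smul r (zact circ u x)" for r u
    unfolding zact_def linext_fun_smul[symmetric]
    by (intro arg_cong[where f="\<lambda>f. linext f x"] ext) (simp split: list.split)
  show "zact circ 0 x = 0"
    using smul[of 0 0] by simp
qed

lemma zact_nil [simp]: "zact circ u (pm_single [] c) = 0"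
  by (simp add: zact_def)

lemma zact_cons: "zact circ u (pm_single (b # w) c) = smul c (zcat (circz circ u (E b)) (E w))"
  by (simp add: zact_def)

lemma zact_zcat: "zact circ u (zcat v x) = zcat (circz circ u v) x"
proof (induct x rule: pm_induct)
  case (single w)
  show ?case
    by (induct v rule: pm_induct) (simp_all add: zcat_single zact_cons)
qed simp_all

lemma harm_linear [simp]:
  "harm circ (x + x') y = harm circ x y + harm circ x' y"
  "harm circ x (y + y') = harm circ x y + harm circ x y'"
  "harm circ (smul r x) y = smul r (harm circ x y)"
  "harm circ x (smul r y) = smul r (harm circ x y)"
  "harm circ 0 y = 0" "harm circ x 0 = 0"
  by (simp_all add: harm_def)

lemma harm_single: "harm circ (E u) (E v) = hprod_w circ u v"
  by (simp add: harm_def)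

lemma tharm_linear [simp]:
  "tharm circ t (x + x') y = tharm circ t x y + tharm circ t x' y"
  "tharm circ t x (y + y') = tharm circ t x y + tharm circ t x y'"
  "tharm circ t (smul r x) y = smul r (tharm circ t x y)"
  "tharm circ t x (smul r y) = smul r (tharm circ t x y)"
  "tharm circ t 0 y = 0" "tharm circ t x 0 = 0"
  by (simp_all add: tharm_def)

lemma tharm_single: "tharm circ t (E u) (E v) = tprod_w circ t u v"
  by (simp add: tharm_def)

lemma St_linear [simp]:
  "St circ t (x + y) = St circ t x + St circ t y"
  "St circ t (smul r x) = smul r (St circ t x)"
  "St circ t 0 = 0"
  by (simp_all add: St_def)

lemma St_single: "St circ t (E w) = St_w circ t w"
  by (simp add: St_def)

lemma zcat_diff2 [simp]: "zcat u (x - (y::'a list \<Rightarrow>\<^sub>0 'r::comm_ring_1)) = zcat u x - zcat u y"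
  and zact_diff2 [simp]: "zact circ u (x - y) = zact circ u x - zact circ u y"
  by (rule additive_diff, simp)+

lemma harm_unit_left [simp]: "harm circ (E []) x = x"
  by (induct x rule: pm_induct) (simp_all add: harm_single)

lemma harm_unit_right [simp]: "harm circ x (E []) = x"
proof (induct x rule: pm_induct)
  case (single w)
  then show ?case by (cases w) (simp_all add: harm_single)
qed simp_all

lemma tharm_unit_left: "tharm circ t (E []) x = x"
  by (induct x rule: pm_induct) (simp_all add: tharm_single)

lemma hprod_w_comm:
  assumes "\<And>a b. circ a b = circ b a"
  shows "hprod_w circ u v = hprod_w circ v u"
  using assms
proof (induct circ u v rule: hprod_w.induct)
  case (1 c v)
  then show ?case by (cases v) simp_all
qed (simp_all add: add_ac)

lemma harm_zcat_zcat: "harm circ (zcat u P) (zcat v Q) = zcat u (harm circ P (zcat v Q))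
   + zcat v (harm circ (zcat u P) Q) + zcat (circz circ u v) (harm circ P Q)"
proof (induct u rule: pm_induct)
  case (single a)
  show ?case
  proof (induct v rule: pm_induct)
    case (single b)
    show ?case
    proof (induct P rule: pm_induct)
      case (single x)
      show ?case
        by (induct Q rule: pm_induct) (simp_all add: add_ac zcat_single harm_single lcons_def)
    qed (simp_all add: add_ac)
  qed (simp_all add: add_ac)
qed (simp_all add: add_ac)

text \<open>The t-deformed concatenation u x + t (u \<circ> x): S^t turns concatenation by u into it.\<close>
abbreviation tcat where "tcat circ t u x \<equiv> zcat u x + smul t (zact circ u x)"

lemma St_zcat: "St circ t (zcat u P) = tcat circ t u (St circ t P)"
proof (induct u rule: pm_induct)
  case (single a)
  show ?case
    by (induct P rule: pm_induct) (simp_all add: add_ac mult.commute zcat_single St_single lcons_def)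
qed (simp_all add: add_ac mult.commute)


section \<open>Consequences of commutativity and associativity of the letter product\<close>

locale comm_assoc_letter_product =
  fixes circ :: "'a \<Rightarrow> 'a \<Rightarrow> ('a \<Rightarrow>\<^sub>0 'r::comm_ring_1)"
  assumes comm: "\<And>a b. circ a b = circ b a"
    and assoc: "\<And>a b c. circz circ (circ a b) (E c) = circz circ (E a) (circ b c)"
begin

abbreviation h where "h \<equiv> harm circ"

lemma circz_comm: "circz circ u v = circz circ v u"
proof (induct u rule: pm_induct)
  case (single a)
  show ?case by (induct v rule: pm_induct) (simp_all add: comm)
qed simp_all

lemma circz_assoc: "circz circ (circz circ u v) w = circz circ u (circz circ v w)"
proof (induct u rule: pm_induct)
  case (single a)
  show ?case
  proof (induct v rule: pm_induct)
    case (single b)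
    show ?case by (induct w rule: pm_induct) (simp_all add: assoc)
  qed simp_all
qed simp_all

lemma circz_lcomm: "circz circ u (circz circ v w) = circz circ v (circz circ u w)"
  by (metis circz_assoc circz_comm)

lemma zact_zact: "zact circ u (zact circ v x) = zact circ (circz circ u v) x"
proof (induct x rule: pm_induct)
  case (single w)
  show ?case by (cases w) (simp_all add: zact_cons zact_zcat circz_assoc)
qed simp_all


lemma harm_comm: "h x y = h y x"
proof (induct x rule: pm_induct)
  case (single u)
  show ?case by (induct y rule: pm_induct) (simp_all add: harm_single hprod_w_comm comm)
qed simp_all

text \<open>Associativity on words, by induction on the total length: expanding both sides with
  the recursion of * leaves only products of shorter words.\<close>
lemma harm_assoc_words: "h (h (E x) (E y)) (E z) = h (E x) (h (E y) (E z))"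
proof (induct "length x + length y + length z" arbitrary: x y z rule: less_induct)
  case less
  show ?case
  proof (cases "x = [] \<or> y = [] \<or> z = []")
    case True
    then show ?thesis by auto
  next
    case False
    then obtain a x' b y' c z' where xyz: "x = a # x'" "y = b # y'" "z = c # z'"
      by (meson neq_Nil_conv)
    have words: "E x = zcat (E a) (E x')" "E y = zcat (E b) (E y')" "E z = zcat (E c) (E z')"
      by (simp_all add: xyz zcat_single)
    have IH: "h (h (E x1) (E y1)) (E z1) = h (E x1) (h (E y1) (E z1))"
      if "length x1 + length y1 + length z1 < length x + length y + length z" for x1 y1 z1
      using that by (rule less)
    have shorter:
      "length x' + length y + length z < length x + length y + length z"
      "length x' + length y + length z' < length x + length y + length z"
      "length x + length y' + length z < length x + length y + length z"
      "length x + length y' + length z' < length x + length y + length z"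
      "length x' + length y' + length z < length x + length y + length z"
      "length x' + length y' + length z' < length x + length y + length z"
      "length x + length y + length z' < length x + length y + length z"
      by (simp_all add: xyz)
    note IHs = shorter[THEN IH, unfolded words]
    txt \<open>Regroup (a x')((b y') z') via the instance (x, y, z') of the hypothesis, so that
      both sides expand into products of shorter words.\<close>
    have first_two: "h (zcat (E a) (E x')) (h (zcat (E b) (E y')) (E z'))
       = h (zcat (E a) (h (E x') (zcat (E b) (E y')))) (E z')
       + h (zcat (E b) (h (zcat (E a) (E x')) (E y'))) (E z')
       + h (zcat (circ a b) (h (E x') (E y'))) (E z')"
      by (simp add: IHs(7)[symmetric] harm_zcat_zcat)
    show ?thesis unfolding words
      by (simp add: harm_zcat_zcat IHs first_two assoc add_ac)
  qed
qed

lemma harm_assoc: "h (h x y) z = h x (h y z)"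
proof (induct x rule: pm_induct)
  case (single u)
  show ?case
  proof (induct y rule: pm_induct)
    case (single v)
    show ?case by (induct z rule: pm_induct) (simp_all add: harm_assoc_words)
  qed simp_all
qed simp_all


lemma St_zact: "St circ t (zact circ u P) = zact circ u (St circ t P)"
proof (induct P rule: pm_induct)
  case (single w)
  show ?case
  proof (cases w)
    case Nil
    then show ?thesis by (simp add: St_single)
  next
    case (Cons b w')
    then show ?thesis
      by (simp add: St_single zact_cons St_zcat lcons_def zact_zcat zact_zact)
  qed
qed simp_all

lemma St_inverse: "St circ (- t) (St circ t x) = x"
proof -
  have "St circ (- t) (St_w circ t w) = E w" for w
    by (induct w) (simp_all add: St_single lcons_def St_zcat St_zact smul_uminus_left zcat_single)
  then show ?thesis
    by (induct x rule: pm_induct) (simp_all add: St_single)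
qed

lemma St_bij: "bij (St circ t)"
  using St_inverse[of t] St_inverse[of "- t"] by (intro o_bij[of "St circ (- t)"]) auto


subsection \<open>S^t is a homomorphism from \<star>_t to *\<close>

lemma harm_zcat_zact: "h (zcat A X) (zact circ B Y) + zcat (circz circ A B) (h X Y)
  = zcat A (h X (zact circ B Y)) + zact circ B (h (zcat A X) Y)"
proof (induct Y rule: pm_induct)
  case (single y)
  show ?case
  proof (cases y)
    case Nil
    then show ?thesis by (simp add: zact_zcat circz_comm)
  next
    case (Cons d y')
    have y: "E y = zcat (E d) (E y')" by (simp add: Cons zcat_single)
    show ?thesis unfolding y
      by (simp add: harm_zcat_zcat zact_zcat circz_assoc circz_comm circz_lcomm add_ac)
  qed
qed (simp_all add: add_ac, metis smul_add_right add.commute)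

lemma harm_zact_zcat: "h (zact circ A X) (zcat B Y) + zcat (circz circ A B) (h X Y)
  = zcat B (h (zact circ A X) Y) + zact circ A (h X (zcat B Y))"
  by (metis harm_zcat_zact harm_comm circz_comm add.commute)

lemma harm_zact_zact: "h (zact circ A X) (zact circ B Y) + zact circ (circz circ A B) (h X Y)
  = zact circ A (h X (zact circ B Y)) + zact circ B (h (zact circ A X) Y)"
proof (induct X rule: pm_induct)
  case (single x)
  show ?case
  proof (induct Y rule: pm_induct)
    case (single y)
    show ?case
    proof (cases x)
      case Nil
      then show ?thesis by (simp add: zact_zact)
    next
      case (Cons c x')
      have x: "E x = zcat (E c) (E x')" by (simp add: Cons zcat_single)
      show ?thesis
      proof (cases y)
        case Nil
        then show ?thesis by (simp add: zact_zact circz_comm)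
      next
        case (Cons d y')
        have y: "E y = zcat (E d) (E y')" by (simp add: Cons zcat_single)
        show ?thesis unfolding x y
          by (simp add: harm_zcat_zcat zact_zcat circz_assoc circz_comm circz_lcomm add_ac)
      qed
    qed
  qed (simp_all add: add_ac, metis smul_add_right add.commute)
qed (simp_all add: add_ac, metis smul_add_right add.commute)

text \<open>The image under S^t of the recursion of \<star>_t is the recursion of * for the
  t-deformed concatenations: this is the inductive step of the homomorphism property.\<close>
lemma harm_tcat_tcat:
  "tcat circ t (E a) (h X (tcat circ t (E b) Y)) + tcat circ t (E b) (h (tcat circ t (E a) X) Y)
     + smul (1 - 2 * t) (tcat circ t (circ a b) (h X Y))
     + smul (t ^ 2 - t) (zact circ (circ a b) (h X Y))
   = h (tcat circ t (E a) X) (tcat circ t (E b) Y)"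
proof -
  have cat_cat: "h (zcat (E a) X) (zcat (E b) Y)
      = zcat (E a) (h X (zcat (E b) Y)) + zcat (E b) (h (zcat (E a) X) Y) + zcat (circ a b) (h X Y)"
    by (simp add: harm_zcat_zcat)
  have cat_act: "h (zcat (E a) X) (zact circ (E b) Y)
      = zcat (E a) (h X (zact circ (E b) Y)) + zact circ (E b) (h (zcat (E a) X) Y)
        - zcat (circ a b) (h X Y)"
    using harm_zcat_zact[of "E a" X "E b" Y] by (simp add: algebra_simps)
  have act_cat: "h (zact circ (E a) X) (zcat (E b) Y)
      = zcat (E b) (h (zact circ (E a) X) Y) + zact circ (E a) (h X (zcat (E b) Y))
        - zcat (circ a b) (h X Y)"
    using harm_zact_zcat[of "E a" X "E b" Y] by (simp add: algebra_simps)
  have act_act: "h (zact circ (E a) X) (zact circ (E b) Y)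
      = zact circ (E a) (h X (zact circ (E b) Y)) + zact circ (E b) (h (zact circ (E a) X) Y)
        - zact circ (circ a b) (h X Y)"
    using harm_zact_zact[of "E a" X "E b" Y] by (simp add: algebra_simps)
  show ?thesis
    by (rule poly_mapping_eqI)
      (simp only: harm_linear zcat_linear zact_linear zcat_diff2 zact_diff2 smul_add_right
        smul_diff_right smul_smul lookup_add lookup_minus lookup_smul cat_cat cat_act act_cat act_act,
       simp add: algebra_simps power2_eq_square)
qed

lemma St_tharm_words: "St circ t (tprod_w circ t u v) = h (St_w circ t u) (St_w circ t v)"
proof (induct u v rule: tprod_w.induct[of
      "\<lambda>_ _ u v. St circ t (tprod_w circ t u v) = h (St_w circ t u) (St_w circ t v)" circ t])
  case 1
  then show ?case by (simp add: St_single)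
next
  case 2
  then show ?case by (simp add: St_single del: St_w.simps(2))
next
  case (3 _ _ a u b v)
  then show ?case
    using harm_tcat_tcat[where X="St_w circ t u" and Y="St_w circ t v"]
    by (simp add: St_zcat St_zact lcons_def)
qed

theorem St_tharm: "St circ t (tharm circ t x y) = h (St circ t x) (St circ t y)"
proof (induct x rule: pm_induct)
  case (single u)
  show ?case
    by (induct y rule: pm_induct) (simp_all add: tharm_single St_single St_tharm_words)
qed simp_all

text \<open>Commutativity and associativity transfer from * to \<star>_t along the bijection S^t.\<close>
lemma tharm_comm: "tharm circ t x y = tharm circ t y x"
  by (metis St_tharm harm_comm St_inverse)

lemma tharm_assoc: "tharm circ t (tharm circ t x y) z = tharm circ t x (tharm circ t y z)"
  by (metis St_tharm harm_assoc St_inverse)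

end


section \<open>Extension of scalars to polynomials\<close>

abbreviation lift_coeffs :: "('a \<Rightarrow>\<^sub>0 'k::comm_ring_1) \<Rightarrow> ('a \<Rightarrow>\<^sub>0 'k poly)" where
  "lift_coeffs \<equiv> Poly_Mapping.map (\<lambda>c. [:c:])"

lemma lookup_lift_coeffs: "pm_lookup (lift_coeffs p) k = [:pm_lookup p k:]"
  by (simp add: Poly_Mapping.map.rep_eq when_def)

lemma lift_coeffs_linear:
  "lift_coeffs (p + q) = lift_coeffs p + lift_coeffs q"
  "lift_coeffs (smul r p) = smul [:r:] (lift_coeffs p)"
  "lift_coeffs 0 = 0"
  "lift_coeffs (E a) = E a"
  by (rule poly_mapping_eqI; simp add: lookup_lift_coeffs lookup_add lookup_single when_def)+

lemma circz_liftc: "circz (liftc circ) (lift_coeffs u) (lift_coeffs v) = lift_coeffs (circz circ u v)"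
proof (induct u rule: pm_induct)
  case (single a)
  show ?case
    by (induct v rule: pm_induct) (simp_all add: lift_coeffs_linear liftc_def)
qed (simp_all add: lift_coeffs_linear)

lemma comm_assoc_liftc:
  assumes "comm_assoc_letter_product circ"
  shows "comm_assoc_letter_product (liftc circ)"
proof
  interpret comm_assoc_letter_product circ by (fact assms)
  fix a b c
  show "liftc circ a b = liftc circ b a"
    by (simp add: liftc_def comm)
  have "circz (liftc circ) (liftc circ a b) (E c) = lift_coeffs (circz circ (circ a b) (E c))"
    using circz_liftc[of circ "circ a b" "E c"] by (simp add: liftc_def lift_coeffs_linear)
  also have "\<dots> = lift_coeffs (circz circ (E a) (circ b c))"
    by (simp add: assoc)
  also have "\<dots> = circz (liftc circ) (E a) (liftc circ b c)"
    using circz_liftc[of circ "E a" "circ b c"] by (simp add: liftc_def lift_coeffs_linear)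
  finally show "circz (liftc circ) (liftc circ a b) (E c) = circz (liftc circ) (E a) (liftc circ b c)" .
qed


theorem theorem3p5:
  fixes circ :: "'a \<Rightarrow> 'a \<Rightarrow> ('a \<Rightarrow>\<^sub>0 'k::comm_ring_1)"
  assumes Qalg: "\<And>n::nat. n > 0 \<Longrightarrow> \<exists>x::'k. of_nat n * x = 1"
    and circ_comm: "\<And>a b. circ a b = circ b a"
    and circ_assoc: "\<And>a b c. circz circ (circ a b) (Poly_Mapping.single c 1)
                              = circz circ (Poly_Mapping.single a 1) (circ b c)"
  defines "T \<equiv> [:0, 1:] :: 'k poly"
  shows "(\<forall>r x y z. tharm (liftc circ) T (smul r x + y) z
                      = smul r (tharm (liftc circ) T x z) + tharm (liftc circ) T y z)
       \<and> (\<forall>x y. tharm (liftc circ) T x y = tharm (liftc circ) T y x)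
       \<and> (\<forall>x y z. tharm (liftc circ) T (tharm (liftc circ) T x y) z
                 = tharm (liftc circ) T x (tharm (liftc circ) T y z))
       \<and> (\<forall>x. tharm (liftc circ) T (Poly_Mapping.single [] 1) x = x)
       \<and> bij (St (liftc circ) T)
       \<and> (\<forall>x y. St (liftc circ) T (tharm (liftc circ) T x y)
                 = harm (liftc circ) (St (liftc circ) T x) (St (liftc circ) T y))"
proof -
  interpret lifted: comm_assoc_letter_product "liftc circ"
    using circ_comm circ_assoc by (intro comm_assoc_liftc) unfold_locales
  show ?thesis
    by (intro conjI allI lifted.tharm_comm lifted.tharm_assoc tharm_unit_left lifted.St_bij
        lifted.St_tharm) simp
qed

end
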